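(* Let $\phi:\Delta\to\mathbb R$ be continuous, and for each $n$ and each pair of partitions $\lambda,\mu\vdash n$ let $\phi^{(\lambda)}_n(\mu)\in\mathbb R$ be given, such that there is a sequence $\delta_n\to0$ (not depending on $\lambda,\mu$) with $|\phi^{(\lambda)}_n(\mu)-\phi(\mu/n)|\le\delta_n$ for all $n,\lambda,\mu$. If $n\to\infty$ and $\lambda=\lambda^{(n)}\vdash n$ satisfies $\lambda/n\to x\in\Delta$, then \[ \frac1n\log\Big(\sum_{\mu\vdash n,\ \mu\trianglerighteq\lambda}\exp\big(n\,\phi^{(\lambda)}_n(\mu)\big)\Big)\to\max_{y\in\Delta(x)}\phi(y). \]
   Context: Fix $\theta\in\{2,3,\dots\}$. A partition $\lambda\vdash n$ means a vector $(\lambda_1,\dots,\lambda_\theta)$ of nonnegative integers with $\lambda_1\ge\dots\ge\lambda_\theta$ and $\sum\lambda_i=n$ (so $\lambda/n\in\Delta$). $\Delta=\{x\in[0,1]^\theta:x_1\ge\dots\ge x_\theta,\ \sum_i x_i=1\}$. For vectors $x,y$ in $\Delta$ (or partitions), $y\trianglerighteq x$ means $y_1+\dots+y_i\ge x_1+\dots+x_i$ for all $i$, and $\Delta(x)=\{y\in\Delta:y\trianglerighteq x\}$. *)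

theory Defs
  imports "HOL-Analysis.Analysis"
begin

text \<open>Vectors in R^theta are represented as functions nat => real (resp. nat => nat for
partitions) indexed by 0..<theta, and equal to 0 at indices >= theta (so that each vector
has a unique representative). Topology on nat => real is the product topology, which on
vectors supported in {..<theta} agrees with the Euclidean topology of R^theta.\<close>

definition simplexD :: "nat \<Rightarrow> (nat \<Rightarrow> real) set" where
  "simplexD theta = {x. (\<forall>i\<ge>theta. x i = 0) \<and> (\<forall>i<theta. 0 \<le> x i \<and> x i \<le> 1)
      \<and> (\<forall>i j. i \<le> j \<and> j < theta \<longrightarrow> x j \<le> x i) \<and> (\<Sum>i<theta. x i) = 1}"

definition partitions :: "nat \<Rightarrow> nat \<Rightarrow> (nat \<Rightarrow> nat) set" where
  "partitions theta n = {l. (\<forall>i\<ge>theta. l i = 0)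
      \<and> (\<forall>i j. i \<le> j \<and> j < theta \<longrightarrow> l j \<le> l i) \<and> (\<Sum>i<theta. l i) = n}"

definition dominates :: "nat \<Rightarrow> (nat \<Rightarrow> real) \<Rightarrow> (nat \<Rightarrow> real) \<Rightarrow> bool" where
  "dominates theta y x \<longleftrightarrow> (\<forall>k\<le>theta. (\<Sum>i<k. x i) \<le> (\<Sum>i<k. y i))"

definition simplexDom :: "nat \<Rightarrow> (nat \<Rightarrow> real) \<Rightarrow> (nat \<Rightarrow> real) set" where
  "simplexDom theta x = {y \<in> simplexD theta. dominates theta y x}"

definition normalize :: "nat \<Rightarrow> (nat \<Rightarrow> nat) \<Rightarrow> (nat \<Rightarrow> real)" where
  "normalize n l = (\<lambda>i. real (l i) / real n)"

end

theory Submission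
  imports Defs "HOL-Real_Asymp.Real_Asymp"
begin

text \<open>
  The sum has at most \<open>(n+1)^\<theta>\<close> terms, so \<open>1/n\<close> times its logarithm lies between
  the largest exponent and that exponent plus \<open>\<theta> log(n+1)/n\<close>; since \<open>\<phi>\<^sub>n\<close> is uniformly
  close to \<open>\<phi>(\<mu>/n)\<close>, it suffices to show that the maximum of \<open>\<phi>(\<mu>/n)\<close> over the partitions
  \<open>\<mu> \<unrhd> \<lambda>\<close> tends to \<open>max \<phi>\<close> over \<open>\<Delta>(x)\<close>.

  From above this is compactness: \<open>\<phi>\<close> stays below the maximum plus \<open>\<epsilon>\<close> on a neighbourhood
  of \<open>\<Delta>(x)\<close> in \<open>\<Delta>\<close>, and \<open>\<mu>/n\<close> lies in such a neighbourhood as soon as \<open>\<lambda>/n\<close> is close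
  to \<open>x\<close>. From below, a maximiser \<open>y\<close> is moved slightly towards \<open>(1,0,\<dots>,0)\<close>, which makes
  it dominate \<open>x\<close> strictly wherever its partial sums are below 1; rounding \<open>n y\<close> down in
  every coordinate but the first then gives partitions that eventually dominate \<open>\<lambda>\<close> and,
  divided by \<open>n\<close>, converge to the perturbed point.
\<close>

lemma tendsto_fun_componentwise:
  fixes f :: "'a \<Rightarrow> 'i \<Rightarrow> 'b::topological_space"
  shows "(f \<longlongrightarrow> l) F \<longleftrightarrow> (\<forall>i. ((\<lambda>c. f c i) \<longlongrightarrow> l i) F)"
proof -
  have "(f \<longlongrightarrow> l) F \<longleftrightarrow> limitin (product_topology (\<lambda>i. euclidean) UNIV) f l F"
    by (simp add: euclidean_product_topology)
  also have "\<dots> \<longleftrightarrow> (\<forall>i. ((\<lambda>c. f c i) \<longlongrightarrow> l i) F)"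
    by (simp add: limitin_componentwise)
  finally show ?thesis .
qed

lemma tendsto_partial_sum:
  fixes f :: "'a \<Rightarrow> 'i \<Rightarrow> 'b::topological_comm_monoid_add"
  assumes "(f \<longlongrightarrow> l) F"
  shows "((\<lambda>c. \<Sum>i\<in>A. f c i) \<longlongrightarrow> (\<Sum>i\<in>A. l i)) F"
  using assms by (intro tendsto_sum) (auto simp: tendsto_fun_componentwise)

lemma continuous_on_partial_sum:
  "continuous_on S (\<lambda>y :: 'i \<Rightarrow> 'b::topological_comm_monoid_add. \<Sum>i\<in>A. y i)"
  by (intro continuous_on_sum)
    (auto intro: continuous_on_subset[OF continuous_on_product_coordinates])

lemma closed_simplexD: "closed (simplexD theta)"
proof -
  have "simplexD theta = {x. (\<forall>i. theta \<le> i \<longrightarrow> x i = 0)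
      \<and> (\<forall>i. i < theta \<longrightarrow> 0 \<le> x i \<and> x i \<le> 1)
      \<and> (\<forall>i j. i \<le> j \<and> j < theta \<longrightarrow> x j \<le> x i) \<and> (\<Sum>i<theta. x i) = 1}"
    by (auto simp: simplexD_def)
  also have "closed \<dots>"
    by (intro closed_Collect_conj closed_Collect_all closed_Collect_imp closed_Collect_eq
        closed_Collect_le open_Collect_const continuous_on_partial_sum
        continuous_on_product_coordinates continuous_on_const)
  finally show ?thesis .
qed

lemma compact_simplexD: "compact (simplexD theta)"
proof -
  define B where "B i = (if i < theta then {0..1} else {0 :: real})" for i :: nat
  have "compactin (product_topology (\<lambda>i. euclidean) UNIV) (PiE UNIV B)"
    by (subst compactin_PiE) (auto simp: B_def)
  then have "compact (PiE UNIV B)"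
    by (simp add: euclidean_product_topology)
  moreover have "simplexD theta \<subseteq> PiE UNIV B"
    by (auto simp: simplexD_def B_def)
  ultimately show ?thesis
    using closed_simplexD by (metis compact_Int_closed inf.absorb_iff2)
qed

lemma compact_simplexDom: "compact (simplexDom theta x)"
proof -
  have "simplexDom theta x =
      simplexD theta \<inter> {y. \<forall>k. k \<le> theta \<longrightarrow> (\<Sum>i<k. x i) \<le> (\<Sum>i<k. y i)}"
    by (auto simp: simplexDom_def dominates_def)
  also have "compact \<dots>"
    by (intro compact_Int_closed compact_simplexD closed_Collect_all closed_Collect_imp
        open_Collect_const closed_Collect_le continuous_on_const continuous_on_partial_sum)
  finally show ?thesis .
qed

lemma simplexD_nonneg: "y \<in> simplexD theta \<Longrightarrow> 0 \<le> y i"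
  by (cases "i < theta") (auto simp: simplexD_def)

lemma partial_sum_le_one:
  assumes "y \<in> simplexD theta" "k \<le> theta"
  shows "(\<Sum>i<k. y i) \<le> 1"
proof -
  have "(\<Sum>i<k. y i) \<le> (\<Sum>i<theta. y i)"
    using assms by (intro sum_mono2) (auto simp: simplexD_nonneg)
  then show ?thesis
    using assms by (simp add: simplexD_def)
qed

lemma partition_le: "m \<in> partitions theta n \<Longrightarrow> m i \<le> n"
  using member_le_sum[of i "{..<theta}" m] by (cases "i < theta") (auto simp: partitions_def)

lemma normalize_in_simplexD:
  assumes "n > 0" "m \<in> partitions theta n"
  shows "normalize n m \<in> simplexD theta"
proof -
  have "(\<Sum>i<theta. normalize n m i) = 1"
    using assms by (simp add: normalize_def partitions_def flip: sum_divide_distrib of_nat_sum)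
  moreover have "normalize n m i \<le> 1" for i
    using assms partition_le[OF assms(2), of i] by (simp add: normalize_def)
  moreover have "normalize n m j \<le> normalize n m i" if "i \<le> j" "j < theta" for i j
    using assms that by (simp add: normalize_def partitions_def divide_right_mono)
  ultimately show ?thesis
    using assms by (simp add: simplexD_def normalize_def partitions_def)
qed

lemma partial_sum_normalize:
  "(\<Sum>i\<in>A. normalize n m i) = real (\<Sum>i\<in>A. m i) / real n"
  by (simp add: normalize_def sum_divide_distrib)

lemma dominates_normalize:
  assumes "n > 0" "dominates theta (\<lambda>i. real (m i)) (\<lambda>i. real (l i))"
  shows "dominates theta (normalize n m) (normalize n l)"
  using assms unfolding dominates_def normalize_def
  by (auto simp: sum_divide_distrib[symmetric] divide_right_mono)

lemma finite_partitions: "finite (partitions theta n)"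
  and card_partitions_le: "card (partitions theta n) \<le> Suc n ^ theta"
proof -
  let ?r = "\<lambda>l :: nat \<Rightarrow> nat. restrict l {..<theta}"
  let ?B = "PiE {..<theta} (\<lambda>_. {..n})"
  have inj: "inj_on ?r (partitions theta n)"
  proof (rule inj_onI, rule ext)
    fix l m i
    assume "l \<in> partitions theta n" "m \<in> partitions theta n" "?r l = ?r m"
    then show "l i = m i"
      by (cases "i < theta") (metis lessThan_iff restrict_apply', simp add: partitions_def)
  qed
  have sub: "?r ` partitions theta n \<subseteq> ?B"
    using partition_le by (auto simp: PiE_iff split: if_splits)
  have fin: "finite ?B"
    by (simp add: finite_PiE)
  show "finite (partitions theta n)"
    using finite_imageD[OF finite_subset[OF sub fin] inj] .
  show "card (partitions theta n) \<le> Suc n ^ theta"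
    using card_inj_on_le[OF inj sub fin] by (simp add: card_PiE)
qed

definition dominating_partitions :: "nat \<Rightarrow> nat \<Rightarrow> (nat \<Rightarrow> nat) \<Rightarrow> (nat \<Rightarrow> nat) set" where
  "dominating_partitions theta n l =
    {m \<in> partitions theta n. dominates theta (\<lambda>i. real (m i)) (\<lambda>i. real (l i))}"

lemma finite_dominating_partitions: "finite (dominating_partitions theta n l)"
  and card_dominating_partitions_le: "card (dominating_partitions theta n l) \<le> Suc n ^ theta"
proof -
  have sub: "dominating_partitions theta n l \<subseteq> partitions theta n"
    by (auto simp: dominating_partitions_def)
  show "finite (dominating_partitions theta n l)"
    by (rule finite_subset[OF sub finite_partitions])
  show "card (dominating_partitions theta n l) \<le> Suc n ^ theta"
    using card_mono[OF finite_partitions sub] card_partitions_le by (rule order.trans)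
qed

lemma tendsto_ln_sum_exp_over_n:
  fixes a :: "nat \<Rightarrow> 'a \<Rightarrow> real" and D :: "nat \<Rightarrow> 'a set"
  assumes fin: "\<And>n. finite (D n)"
    and card: "\<And>n. card (D n) \<le> Suc n ^ p"
    and upper: "\<And>e. e > 0 \<Longrightarrow> eventually (\<lambda>n. \<forall>m\<in>D n. a n m \<le> M + e) sequentially"
    and lower: "\<And>e. e > 0 \<Longrightarrow> eventually (\<lambda>n. \<exists>m\<in>D n. M - e \<le> a n m) sequentially"
  shows "(\<lambda>n. ln (\<Sum>m\<in>D n. exp (real n * a n m)) / real n) \<longlonglongrightarrow> M"
proof -
  define S where "S n = (\<Sum>m\<in>D n. exp (real n * a n m))" for n
  have S_ge: "exp (real n * a n m) \<le> S n" if "m \<in> D n" for n m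
    unfolding S_def using fin that by (intro member_le_sum) auto
  have S_pos: "0 < S n" if "m \<in> D n" for n m
    using S_ge[OF that] exp_gt_zero order.strict_trans2 by blast
  have "eventually (\<lambda>n. c < ln (S n) / real n) sequentially" if "c < M" for c
  proof -
    have "eventually (\<lambda>n. \<exists>m\<in>D n. M - (M - c) / 2 \<le> a n m) sequentially"
      using that by (intro lower) simp
    then show ?thesis
      using eventually_gt_at_top[of "0::nat"]
    proof eventually_elim
      case (elim n)
      then obtain m where m: "m \<in> D n" "M - (M - c) / 2 \<le> a n m"
        by auto
      have "real n * a n m \<le> ln (S n)"
        using S_ge[OF m(1)] S_pos[OF m(1)] by (simp add: ln_ge_iff)
      then have "a n m \<le> ln (S n) / real n"
        using elim by (simp add: le_divide_eq mult.commute)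
      then show ?case
        using m(2) that by (simp add: field_simps)
    qed
  qed
  moreover have "eventually (\<lambda>n. ln (S n) / real n < c) sequentially" if "M < c" for c
  proof -
    define e where "e = (c - M) / 2"
    have e: "e > 0" and c: "c = M + 2 * e"
      using that by (simp_all add: e_def field_simps)
    have "(\<lambda>n. real p * ln (real (Suc n)) / real n) \<longlonglongrightarrow> 0"
      by real_asymp
    then have "eventually (\<lambda>n. real p * ln (real (Suc n)) / real n < e) sequentially"
      using e by (rule order_tendstoD)
    then show ?thesis
      using upper[OF e] lower[OF zero_less_one] eventually_gt_at_top[of "0::nat"]
    proof eventually_elim
      case (elim n)
      then obtain m where "m \<in> D n"
        by auto
      have "S n \<le> real (card (D n)) * exp (real n * (M + e))"
        unfolding S_def using elim by (intro sum_bounded_above) (simp add: mult_left_mono)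
      also have "\<dots> \<le> real (Suc n) ^ p * exp (real n * (M + e))"
        using card[of n] by (intro mult_right_mono) (metis of_nat_le_iff of_nat_power, simp)
      finally have "ln (S n) \<le> ln (real (Suc n) ^ p * exp (real n * (M + e)))"
        using S_pos[OF \<open>m \<in> D n\<close>] by (simp del: of_nat_Suc)
      also have "\<dots> = real p * ln (real (Suc n)) + real n * (M + e)"
        by (simp add: ln_mult ln_realpow del: of_nat_Suc)
      finally have "ln (S n) / real n \<le> real p * ln (real (Suc n)) / real n + (M + e)"
        using elim by (simp add: divide_le_eq algebra_simps del: of_nat_Suc)
      then show ?case
        using elim(1) c by linarith
    qed
  qed
  ultimately show ?thesis
    unfolding S_def by (rule order_tendstoI)
qed

lemma tendsto_ln_sum_exp_over_n_perturbed:
  fixes a g :: "nat \<Rightarrow> 'a \<Rightarrow> real" and D :: "nat \<Rightarrow> 'a set"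
  assumes fin: "\<And>n. finite (D n)"
    and card: "\<And>n. card (D n) \<le> Suc n ^ p"
    and approx: "\<And>n m. n > 0 \<Longrightarrow> m \<in> D n \<Longrightarrow> \<bar>a n m - g n m\<bar> \<le> delta n"
    and delta: "delta \<longlonglongrightarrow> 0"
    and upper: "\<And>e. e > 0 \<Longrightarrow> eventually (\<lambda>n. \<forall>m\<in>D n. g n m < M + e) sequentially"
    and lower: "\<And>e. e > 0 \<Longrightarrow> eventually (\<lambda>n. \<exists>m\<in>D n. M - e < g n m) sequentially"
  shows "(\<lambda>n. ln (\<Sum>m\<in>D n. exp (real n * a n m)) / real n) \<longlonglongrightarrow> M"
proof (rule tendsto_ln_sum_exp_over_n[OF fin card])
  fix e :: real
  assume "e > 0"
  then have half: "e / 2 > 0"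
    by simp
  then have "eventually (\<lambda>n. delta n < e / 2) sequentially"
    by (rule order_tendstoD(2)[OF delta])
  then have small: "eventually (\<lambda>n. n > 0 \<and> delta n < e / 2) sequentially"
    using eventually_gt_at_top[of 0] by (simp add: eventually_conj_iff)
  show "eventually (\<lambda>n. \<forall>m\<in>D n. a n m \<le> M + e) sequentially"
    using upper[OF half] small
  proof eventually_elim
    case (elim n)
    then show ?case
      using approx[of n] unfolding abs_le_iff by fastforce
  qed
  show "eventually (\<lambda>n. \<exists>m\<in>D n. M - e \<le> a n m) sequentially"
    using lower[OF half] small
  proof eventually_elim
    case (elim n)
    then obtain m where m: "m \<in> D n" "M - e / 2 < g n m"
      by blast
    then show ?case
      using approx[OF _ m(1)] elim(2) unfolding abs_le_iff by force
  qed
qed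

lemma less_near_simplexDom:
  fixes phi :: "(nat \<Rightarrow> real) \<Rightarrow> real"
  assumes cont: "continuous_on (simplexD theta) phi"
    and bound: "\<forall>z\<in>simplexDom theta x. phi z \<le> M" and e: "e > 0"
  obtains eta where "eta > 0"
    "\<And>z. z \<in> simplexD theta \<Longrightarrow> \<forall>k\<le>theta. (\<Sum>i<k. x i) - eta \<le> (\<Sum>i<k. z i) \<Longrightarrow>
      phi z < M + e"
proof -
  define K where "K = simplexD theta \<inter> phi -` {M + e..}"
  \<comment> \<open>\<open>g\<close> vanishes exactly on \<open>\<Delta>(x)\<close>, so it is bounded below by a positive constant on \<open>K\<close>\<close>
  define g where "g z = (\<Sum>k\<le>theta. max 0 ((\<Sum>i<k. x i) - (\<Sum>i<k. z i)))" for z :: "nat \<Rightarrow> real"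
  have "closed K"
    unfolding K_def by (intro continuous_closed_preimage cont closed_simplexD closed_atLeast)
  then have "compact K"
    using compact_Int_closed[OF compact_simplexD] by (metis K_def Int_absorb Int_assoc)
  have g_pos: "0 < g z" if "z \<in> K" for z
  proof -
    have "z \<in> simplexD theta" "z \<notin> simplexDom theta x"
      using that bound e by (force simp: K_def)+
    then obtain k where k: "k \<le> theta" "(\<Sum>i<k. z i) < (\<Sum>i<k. x i)"
      by (auto simp: simplexDom_def dominates_def not_le)
    have "0 < max 0 ((\<Sum>i<k. x i) - (\<Sum>i<k. z i))"
      using k by simp
    also have "\<dots> \<le> g z"
      unfolding g_def using k by (intro member_le_sum) auto
    finally show ?thesis .
  qed
  show thesis
  proof (cases "K = {}")
    case True
    then show thesis
      by (intro that[of 1]) (auto simp: K_def not_le)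
  next
    case False
    have "continuous_on K g"
      unfolding g_def by (intro continuous_intros continuous_on_partial_sum)
    then obtain z0 where z0: "z0 \<in> K" "\<And>z. z \<in> K \<Longrightarrow> g z0 \<le> g z"
      using continuous_attains_inf[OF \<open>compact K\<close> False] by blast
    define eta where "eta = g z0 / (real theta + 2)"
    have eta: "eta > 0"
      using g_pos[OF z0(1)] by (simp add: eta_def)
    show thesis
    proof (rule that[OF eta], rule ccontr)
      fix z
      assume "z \<in> simplexD theta" "\<not> phi z < M + e"
        and near: "\<forall>k\<le>theta. (\<Sum>i<k. x i) - eta \<le> (\<Sum>i<k. z i)"
      then have "z \<in> K"
        by (simp add: K_def)
      have "g z \<le> (\<Sum>k\<le>theta. eta)"
        unfolding g_def using near eta by (intro sum_mono) auto
      also have "\<dots> < g z0"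
        using g_pos[OF z0(1)] by (simp add: eta_def field_simps)
      finally show False
        using z0(2)[OF \<open>z \<in> K\<close>] by simp
    qed
  qed
qed

lemma eventually_dominating_partitions_less:
  fixes phi :: "(nat \<Rightarrow> real) \<Rightarrow> real"
  assumes cont: "continuous_on (simplexD theta) phi"
    and bound: "\<forall>z\<in>simplexDom theta x. phi z \<le> M" and e: "e > 0"
    and lam: "(\<lambda>n. normalize n (lam n)) \<longlonglongrightarrow> x"
  shows "eventually (\<lambda>n. \<forall>m\<in>dominating_partitions theta n (lam n). phi (normalize n m) < M + e)
    sequentially"
proof -
  obtain eta where eta: "eta > 0"
    "\<And>z. z \<in> simplexD theta \<Longrightarrow> \<forall>k\<le>theta. (\<Sum>i<k. x i) - eta \<le> (\<Sum>i<k. z i) \<Longrightarrow>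
      phi z < M + e"
    using less_near_simplexDom[OF cont bound e] by blast
  have "eventually (\<lambda>n. (\<Sum>i<k. x i) - eta < (\<Sum>i<k. normalize n (lam n) i)) sequentially"
    for k
    using tendsto_partial_sum[OF lam] by (rule order_tendstoD) (simp add: eta)
  then have "eventually (\<lambda>n. \<forall>k\<in>{..theta}.
      (\<Sum>i<k. x i) - eta < (\<Sum>i<k. normalize n (lam n) i)) sequentially"
    by (intro eventually_ball_finite) auto
  then show ?thesis
    using eventually_gt_at_top[of "0::nat"]
  proof eventually_elim
    case (elim n)
    show ?case
    proof
      fix m
      assume "m \<in> dominating_partitions theta n (lam n)"
      then have m: "m \<in> partitions theta n" "dominates theta (\<lambda>i. real (m i)) (\<lambda>i. real (lam n i))"
        by (simp_all add: dominating_partitions_def)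
      have "dominates theta (normalize n m) (normalize n (lam n))"
        using elim m by (intro dominates_normalize) auto
      then show "phi (normalize n m) < M + e"
        using elim m by (intro eta(2) normalize_in_simplexD) (force simp: dominates_def)+
    qed
  qed
qed

definition push_first :: "real \<Rightarrow> (nat \<Rightarrow> real) \<Rightarrow> nat \<Rightarrow> real" where
  "push_first t y = (\<lambda>i. (1 - t) * y i + (if i = 0 then t else 0))"

lemma partial_sum_push_first:
  assumes "0 < k"
  shows "(\<Sum>i<k. push_first t y i) = (1 - t) * (\<Sum>i<k. y i) + t"
  using assms by (simp add: push_first_def sum.distrib sum_distrib_left)

lemma push_first_in_simplexD:
  assumes "0 < theta" "y \<in> simplexD theta" "0 \<le> t" "t \<le> 1"
  shows "push_first t y \<in> simplexD theta"
  unfolding simplexD_def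
proof (intro CollectI conjI allI impI)
  have y: "\<forall>i\<ge>theta. y i = 0" "\<forall>i<theta. 0 \<le> y i \<and> y i \<le> 1"
    "\<forall>i j. i \<le> j \<and> j < theta \<longrightarrow> y j \<le> y i" "(\<Sum>i<theta. y i) = 1"
    using assms(2) by (auto simp: simplexD_def)
  show "(\<Sum>i<theta. push_first t y i) = 1"
    using assms(1) y(4) by (simp add: partial_sum_push_first)
  fix i
  show "push_first t y i = 0" if "theta \<le> i"
    using that assms(1) y(1) by (simp add: push_first_def)
  assume "i < theta"
  then have "0 \<le> (1 - t) * y i" "(1 - t) * y i \<le> 1 - t"
    using y(2) assms(4) by (simp_all add: mult_left_le)
  then show "0 \<le> push_first t y i" "push_first t y i \<le> 1"
    using assms(3,4) by (auto simp: push_first_def)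
next
  fix i j
  assume ij: "i \<le> j \<and> j < theta"
  then have "(1 - t) * y j \<le> (1 - t) * y i"
    using assms(2,4) by (intro mult_left_mono) (auto simp: simplexD_def)
  then show "push_first t y j \<le> push_first t y i"
    using ij assms(3) by (auto simp: push_first_def)
qed

lemma partial_sum_push_first_gt:
  assumes x: "x \<in> simplexD theta" and y: "y \<in> simplexDom theta x"
    and t: "0 < t" "t \<le> 1" and k: "0 < k" "k \<le> theta"
  shows "(\<Sum>i<k. x i) < (\<Sum>i<k. push_first t y i) \<or> (\<Sum>i<k. push_first t y i) = 1"
proof (cases "(\<Sum>i<k. x i) = 1")
  case True
  moreover have "(\<Sum>i<k. x i) \<le> (\<Sum>i<k. y i)" "(\<Sum>i<k. y i) \<le> 1"
    using y k by (auto simp: simplexDom_def dominates_def intro: partial_sum_le_one)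
  ultimately have "(\<Sum>i<k. y i) = 1"
    by simp
  then show ?thesis
    using k by (simp add: partial_sum_push_first)
next
  case False
  then have "(\<Sum>i<k. x i) < 1"
    using partial_sum_le_one[OF x k(2)] by simp
  then have "0 < t * (1 - (\<Sum>i<k. x i))"
    using t by simp
  moreover have "(1 - t) * (\<Sum>i<k. x i) \<le> (1 - t) * (\<Sum>i<k. y i)"
    using y k t by (intro mult_left_mono) (auto simp: simplexDom_def dominates_def)
  moreover have "(\<Sum>i<k. x i) + t * (1 - (\<Sum>i<k. x i)) = (1 - t) * (\<Sum>i<k. x i) + t"
    by (simp add: algebra_simps)
  ultimately have "(\<Sum>i<k. x i) < (1 - t) * (\<Sum>i<k. y i) + t"
    by linarith
  then show ?thesis
    using k by (simp add: partial_sum_push_first)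
qed

lemma tendsto_push_first: "((\<lambda>t. push_first t y) \<longlongrightarrow> y) (at 0)"
  unfolding tendsto_fun_componentwise push_first_def
proof
  fix i
  show "((\<lambda>t. (1 - t) * y i + (if i = 0 then t else 0)) \<longlongrightarrow> y i) (at 0)"
    by (cases "i = 0") (auto intro!: tendsto_eq_intros)
qed

lemma push_first_near:
  fixes phi :: "(nat \<Rightarrow> real) \<Rightarrow> real"
  assumes theta: "0 < theta" and cont: "continuous_on (simplexD theta) phi"
    and y: "y \<in> simplexD theta" and e: "e > 0"
  obtains t where "0 < t" "t < 1" "phi y - e < phi (push_first t y)"
proof -
  have interval: "eventually (\<lambda>t. t \<in> {0<..<1}) (at_right (0::real))"
    by (rule eventually_at_right_real) simp
  then have "eventually (\<lambda>t. push_first t y \<in> simplexD theta) (at_right 0)"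
    by eventually_elim (intro push_first_in_simplexD[OF theta y]; simp)
  then have "((\<lambda>t. phi (push_first t y)) \<longlongrightarrow> phi y) (at_right 0)"
    using continuous_on_tendsto_compose[OF cont tendsto_mono[OF at_le[OF subset_UNIV]
        tendsto_push_first] y] by blast
  then have "eventually (\<lambda>t. phi y - e < phi (push_first t y)) (at_right 0)"
    by (rule order_tendstoD) (simp add: e)
  with interval have "eventually (\<lambda>t. t \<in> {0<..<1} \<and> phi y - e < phi (push_first t y))
      (at_right 0)"
    by eventually_elim simp
  then have "\<exists>t. t \<in> {0<..<1} \<and> phi y - e < phi (push_first t y)"
    by (rule eventually_happens'[OF trivial_limit_at_right_real])
  then show thesis
    using that by auto
qed

text \<open>
  Round \<open>n y\<close> down in every coordinate but the first, which absorbs the deficit (less than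
  \<open>\<theta>\<close>); this keeps every prefix sum at least that of \<open>n y\<close>.
\<close>

definition round_partition :: "nat \<Rightarrow> (nat \<Rightarrow> real) \<Rightarrow> nat \<Rightarrow> nat \<Rightarrow> nat" where
  "round_partition theta y n i =
    (if i = 0 then n - (\<Sum>j\<in>{1..<theta}. nat \<lfloor>real n * y j\<rfloor>)
     else if i < theta then nat \<lfloor>real n * y i\<rfloor> else 0)"

lemma nat_floor_bounds:
  fixes a :: real
  assumes "0 \<le> a"
  shows "real (nat \<lfloor>a\<rfloor>) \<le> a" "a - 1 < real (nat \<lfloor>a\<rfloor>)"
  using assms by linarith+

lemma round_partition_prefix_sum:
  assumes theta: "0 < theta" and y: "y \<in> simplexD theta" and k: "0 < k" "k \<le> theta"
  shows "real (\<Sum>i<k. round_partition theta y n i) =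
    real n - (\<Sum>j\<in>{k..<theta}. real (nat \<lfloor>real n * y j\<rfloor>))"
proof -
  define f where "f j = nat \<lfloor>real n * y j\<rfloor>" for j
  have f_le: "real (f j) \<le> real n * y j" for j
    unfolding f_def using simplexD_nonneg[OF y] by (intro nat_floor_bounds) simp
  have "real (\<Sum>j\<in>{1..<theta}. f j) \<le> (\<Sum>j\<in>{1..<theta}. real n * y j)"
    unfolding of_nat_sum by (intro sum_mono f_le)
  also have "\<dots> \<le> (\<Sum>j<theta. real n * y j)"
    using simplexD_nonneg[OF y] by (intro sum_mono2) auto
  also have "\<dots> = real n"
    using y by (simp add: simplexD_def flip: sum_distrib_left)
  finally have "(\<Sum>j\<in>{1..<theta}. f j) \<le> n"
    by linarith
  then have first: "real (round_partition theta y n 0) = real n - (\<Sum>j\<in>{1..<theta}. real (f j))"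
    by (simp add: round_partition_def f_def)
  have "{..<k} = insert 0 {1..<k}"
    using k by auto
  then have "(\<Sum>i<k. round_partition theta y n i) = round_partition theta y n 0 + (\<Sum>i\<in>{1..<k}. f i)"
    using k by (simp add: round_partition_def f_def)
  moreover have "(\<Sum>j\<in>{1..<theta}. real (f j)) = (\<Sum>j\<in>{1..<k}. real (f j)) + (\<Sum>j\<in>{k..<theta}. real (f j))"
    using k by (intro sum.atLeastLessThan_concat[symmetric]) auto
  ultimately show ?thesis
    using first by (simp add: f_def)
qed

lemma round_partition_dominates:
  assumes theta: "0 < theta" and y: "y \<in> simplexD theta" and k: "k \<le> theta"
  shows "real n * (\<Sum>i<k. y i) \<le> real (\<Sum>i<k. round_partition theta y n i)"
proof (cases "k = 0")
  case False
  have "(\<Sum>j\<in>{k..<theta}. real (nat \<lfloor>real n * y j\<rfloor>)) \<le> (\<Sum>j\<in>{k..<theta}. real n * y j)"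
    using simplexD_nonneg[OF y] by (intro sum_mono nat_floor_bounds) simp
  also have "\<dots> = real n * (1 - (\<Sum>i<k. y i))"
    using y k sum.atLeastLessThan_concat[of 0 k theta y]
    by (simp add: simplexD_def atLeast0LessThan sum_distrib_left[symmetric])
  finally show ?thesis
    using round_partition_prefix_sum[OF theta y _ k, where n = n] False
    by (simp add: right_diff_distrib)
qed simp

lemma round_partition_in_partitions:
  assumes theta: "0 < theta" and y: "y \<in> simplexD theta"
  shows "round_partition theta y n \<in> partitions theta n"
  unfolding partitions_def
proof (intro CollectI conjI allI impI)
  show "round_partition theta y n i = 0" if "theta \<le> i" for i
    using that theta by (simp add: round_partition_def)
  have "real (\<Sum>i<theta. round_partition theta y n i) = real n"
    using round_partition_prefix_sum[OF theta y theta order_refl] by simp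
  then show "(\<Sum>i<theta. round_partition theta y n i) = n"
    by (simp only: of_nat_eq_iff)
next
  fix i j
  assume ij: "i \<le> j \<and> j < theta"
  show "round_partition theta y n j \<le> round_partition theta y n i"
  proof (cases "i = 0")
    case True
    have "real (round_partition theta y n j) \<le> real n * y 0" if "j \<noteq> 0"
    proof -
      have "real (round_partition theta y n j) \<le> real n * y j"
        using that ij simplexD_nonneg[OF y] by (simp add: round_partition_def nat_floor_bounds)
      also have "\<dots> \<le> real n * y 0"
        using y ij by (intro mult_left_mono) (auto simp: simplexD_def)
      finally show ?thesis .
    qed
    moreover have "real n * y 0 \<le> real (round_partition theta y n 0)"
      using round_partition_dominates[OF theta y, of 1] theta by simp
    ultimately show ?thesis
      using True by (cases "j = 0") simp_all
  next
    case False
    have "real n * y j \<le> real n * y i"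
      using y ij by (intro mult_left_mono) (auto simp: simplexD_def)
    then show ?thesis
      using False ij by (simp add: round_partition_def nat_mono floor_mono)
  qed
qed

lemma round_partition_close:
  assumes theta: "0 < theta" and y: "y \<in> simplexD theta"
  shows "\<bar>real (round_partition theta y n i) - real n * y i\<bar> \<le> real theta"
proof -
  consider "i = 0" | "0 < i" "i < theta" | "theta \<le> i"
    by linarith
  then show ?thesis
  proof cases
    case 1
    define T where "T = (\<Sum>j\<in>{1..<theta}. real n * y j)"
    define F where "F = (\<Sum>j\<in>{1..<theta}. real (nat \<lfloor>real n * y j\<rfloor>))"
    have "{..<theta} = insert 0 {1..<theta}"
      using theta by auto
    then have "y 0 = 1 - (\<Sum>j\<in>{1..<theta}. y j)"
      using y by (simp add: simplexD_def)
    then have "real n * y 0 = real n - T"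
      by (simp add: T_def right_diff_distrib sum_distrib_left)
    moreover have "real (round_partition theta y n 0) = real n - F"
      using round_partition_prefix_sum[OF theta y, of 1 n] theta by (simp add: F_def)
    moreover have "F \<le> T"
      unfolding F_def T_def using simplexD_nonneg[OF y] by (intro sum_mono nat_floor_bounds) simp
    moreover have "(\<Sum>j\<in>{1..<theta}. real n * y j - 1) \<le> F"
      unfolding F_def using simplexD_nonneg[OF y]
      by (intro sum_mono less_imp_le[OF nat_floor_bounds(2)]) simp
    then have "T - real theta \<le> F"
      by (simp add: T_def sum_subtractf)
    ultimately show ?thesis
      using 1 by (simp add: abs_le_iff)
  next
    case 2
    then have "round_partition theta y n i = nat \<lfloor>real n * y i\<rfloor>"
      by (simp add: round_partition_def)
    moreover have "0 \<le> real n * y i"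
      using simplexD_nonneg[OF y, of i] by simp
    ultimately show ?thesis
      using nat_floor_bounds[of "real n * y i"] 2 by (simp only: abs_le_iff) linarith
  next
    case 3
    then show ?thesis
      using theta y by (simp add: round_partition_def simplexD_def)
  qed
qed

lemma tendsto_normalize_round_partition:
  assumes theta: "0 < theta" and y: "y \<in> simplexD theta"
  shows "(\<lambda>n. normalize n (round_partition theta y n)) \<longlonglongrightarrow> y"
  unfolding tendsto_fun_componentwise
proof
  fix i
  have "(\<lambda>n. normalize n (round_partition theta y n) i - y i) \<longlonglongrightarrow> 0"
  proof (rule Lim_null_comparison)
    show "(\<lambda>n. real theta / real n) \<longlonglongrightarrow> 0"
      by (rule lim_const_over_n)
    have close: "\<bar>normalize n (round_partition theta y n) i - y i\<bar> \<le> real theta / real n"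
      if "n > 0" for n
    proof -
      have "normalize n (round_partition theta y n) i - y i =
          (real (round_partition theta y n i) - real n * y i) / real n"
        using that by (simp add: normalize_def field_simps)
      then show ?thesis
        using round_partition_close[OF theta y, of n i] that
        by (simp add: divide_right_mono)
    qed
    then show "eventually (\<lambda>n. norm (normalize n (round_partition theta y n) i - y i)
        \<le> real theta / real n) sequentially"
      by (intro eventually_mono[OF eventually_gt_at_top[of 0]]) (simp add: close)
  qed
  then show "(\<lambda>n. normalize n (round_partition theta y n) i) \<longlonglongrightarrow> y i"
    by (rule LIM_zero_cancel)
qed

lemma eventually_round_partition_dominates:
  assumes theta: "0 < theta" and y: "y \<in> simplexD theta"
    and lam: "(\<lambda>n. normalize n (lam n)) \<longlonglongrightarrow> x"
    and lam_partition: "\<And>n. n > 0 \<Longrightarrow> lam n \<in> partitions theta n"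
    and strict: "\<And>k. 0 < k \<Longrightarrow> k \<le> theta \<Longrightarrow>
      (\<Sum>i<k. x i) < (\<Sum>i<k. y i) \<or> (\<Sum>i<k. y i) = 1"
  shows "eventually (\<lambda>n. dominates theta (\<lambda>i. real (round_partition theta y n i))
      (\<lambda>i. real (lam n i))) sequentially"
proof -
  have "eventually (\<lambda>n. real (\<Sum>i<k. lam n i) \<le> real n * (\<Sum>i<k. y i)) sequentially"
    if k: "k \<le> theta" for k
  proof (cases "k = 0")
    case False
    from strict[OF _ k] False consider "(\<Sum>i<k. x i) < (\<Sum>i<k. y i)" | "(\<Sum>i<k. y i) = 1"
      by auto
    then show ?thesis
    proof cases
      case 1
      have "eventually (\<lambda>n. (\<Sum>i<k. normalize n (lam n) i) < (\<Sum>i<k. y i)) sequentially"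
        using tendsto_partial_sum[OF lam] 1 by (rule order_tendstoD)
      then show ?thesis
        using eventually_gt_at_top[of "0::nat"]
        by eventually_elim (simp add: partial_sum_normalize divide_less_eq mult.commute)
    next
      case 2
      have "(\<Sum>i<k. lam n i) \<le> n" if "n > 0" for n
      proof -
        have "(\<Sum>i<k. lam n i) \<le> (\<Sum>i<theta. lam n i)"
          using k by (intro sum_mono2) auto
        also have "\<dots> = n"
          using lam_partition[OF that] by (simp add: partitions_def)
        finally show ?thesis .
      qed
      then show ?thesis
        using 2 by (intro eventually_mono[OF eventually_gt_at_top[of 0]]) (simp del: of_nat_sum)
    qed
  qed simp
  then have "eventually (\<lambda>n. \<forall>k\<in>{..theta}.
      real (\<Sum>i<k. lam n i) \<le> real n * (\<Sum>i<k. y i)) sequentially"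
    by (intro eventually_ball_finite) auto
  then show ?thesis
  proof eventually_elim
    case (elim n)
    show ?case
      unfolding dominates_def
    proof (intro allI impI)
      fix k
      assume k: "k \<le> theta"
      have "real (\<Sum>i<k. lam n i) \<le> real n * (\<Sum>i<k. y i)"
        using elim k by simp
      also have "\<dots> \<le> real (\<Sum>i<k. round_partition theta y n i)"
        by (rule round_partition_dominates[OF theta y k])
      finally show "(\<Sum>i<k. real (lam n i)) \<le> (\<Sum>i<k. real (round_partition theta y n i))"
        by simp
    qed
  qed
qed

lemma eventually_dominating_partitions_greater:
  fixes phi :: "(nat \<Rightarrow> real) \<Rightarrow> real"
  assumes theta: "0 < theta" and cont: "continuous_on (simplexD theta) phi"
    and x: "x \<in> simplexD theta" and y: "y \<in> simplexDom theta x" and e: "e > 0"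
    and lam: "(\<lambda>n. normalize n (lam n)) \<longlonglongrightarrow> x"
    and lam_partition: "\<And>n. n > 0 \<Longrightarrow> lam n \<in> partitions theta n"
  shows "eventually (\<lambda>n. \<exists>m\<in>dominating_partitions theta n (lam n). phi y - e < phi (normalize n m))
    sequentially"
proof -
  have y_simplex: "y \<in> simplexD theta"
    using y by (simp add: simplexDom_def)
  have "e / 2 > 0"
    using e by simp
  then obtain t where t: "0 < t" "t < 1" "phi y - e / 2 < phi (push_first t y)"
    using push_first_near[OF theta cont y_simplex] by blast
  define z where "z = push_first t y"
  have z: "z \<in> simplexD theta"
    unfolding z_def using t by (intro push_first_in_simplexD[OF theta y_simplex]) auto
  have "eventually (\<lambda>n. normalize n (round_partition theta z n) \<in> simplexD theta) sequentially"
    using eventually_gt_at_top[of 0]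
    by eventually_elim (intro normalize_in_simplexD round_partition_in_partitions[OF theta z])
  then have "(\<lambda>n. phi (normalize n (round_partition theta z n))) \<longlonglongrightarrow> phi z"
    by (rule continuous_on_tendsto_compose[OF cont tendsto_normalize_round_partition[OF theta z] z])
  then have "eventually (\<lambda>n. phi z - e / 2 < phi (normalize n (round_partition theta z n))) sequentially"
    by (rule order_tendstoD) (simp add: e)
  moreover have "eventually (\<lambda>n. dominates theta (\<lambda>i. real (round_partition theta z n i))
      (\<lambda>i. real (lam n i))) sequentially"
    using partial_sum_push_first_gt[OF x y t(1) less_imp_le[OF t(2)]]
    by (intro eventually_round_partition_dominates[OF theta z lam lam_partition]) (unfold z_def, blast)
  ultimately show ?thesis
  proof eventually_elim
    case (elim n)
    have "phi y - e < phi (normalize n (round_partition theta z n))"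
      using elim(1) t(3) unfolding z_def by linarith
    then show ?case
      using elim(2) round_partition_in_partitions[OF theta z]
      unfolding dominating_partitions_def by blast
  qed
qed

theorem lemma3p2:
  fixes theta :: nat
    and phi :: "(nat \<Rightarrow> real) \<Rightarrow> real"
    and phin :: "nat \<Rightarrow> (nat \<Rightarrow> nat) \<Rightarrow> (nat \<Rightarrow> nat) \<Rightarrow> real"
    and delta :: "nat \<Rightarrow> real"
    and lam :: "nat \<Rightarrow> (nat \<Rightarrow> nat)"
    and x :: "nat \<Rightarrow> real"
  assumes "theta \<ge> 2"
    and "continuous_on (simplexD theta) phi"
    and "delta \<longlonglongrightarrow> 0"
    and "\<And>n l m. n > 0 \<Longrightarrow> l \<in> partitions theta n \<Longrightarrow> m \<in> partitions theta n \<Longrightarrow>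
           \<bar>phin n l m - phi (normalize n m)\<bar> \<le> delta n"
    and "\<And>n. n > 0 \<Longrightarrow> lam n \<in> partitions theta n"
    and "x \<in> simplexD theta"
    and "(\<lambda>n. normalize n (lam n)) \<longlonglongrightarrow> x"
  shows "\<exists>y\<in>simplexDom theta x. (\<forall>z\<in>simplexDom theta x. phi z \<le> phi y) \<and>
     (\<lambda>n. ln (\<Sum>m\<in>{m \<in> partitions theta n.
                  dominates theta (\<lambda>i. real (m i)) (\<lambda>i. real (lam n i))}.
               exp (real n * phin n (lam n) m)) / real n) \<longlonglongrightarrow> phi y"
proof -
  have theta: "0 < theta"
    using assms(1) by simp
  note cont = assms(2) and delta = assms(3) and approx = assms(4)
    and lam_partition = assms(5) and x = assms(6) and lam = assms(7)
  have "continuous_on (simplexDom theta x) phi"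
    using cont by (rule continuous_on_subset) (simp add: simplexDom_def)
  moreover have "x \<in> simplexDom theta x"
    using x by (simp add: simplexDom_def dominates_def)
  ultimately obtain y where y: "y \<in> simplexDom theta x" "\<forall>z\<in>simplexDom theta x. phi z \<le> phi y"
    using continuous_attains_sup[OF compact_simplexDom] by blast
  have "(\<lambda>n. ln (\<Sum>m\<in>dominating_partitions theta n (lam n). exp (real n * phin n (lam n) m)) /
      real n) \<longlonglongrightarrow> phi y"
  proof (rule tendsto_ln_sum_exp_over_n_perturbed[OF finite_dominating_partitions
        card_dominating_partitions_le _ delta, where g = "\<lambda>n m. phi (normalize n m)"])
    show "\<bar>phin n (lam n) m - phi (normalize n m)\<bar> \<le> delta n"
      if "n > 0" "m \<in> dominating_partitions theta n (lam n)" for n m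
      using that by (intro approx lam_partition) (simp_all add: dominating_partitions_def)
    show "eventually (\<lambda>n. \<forall>m\<in>dominating_partitions theta n (lam n). phi (normalize n m) < phi y + e)
        sequentially" if "e > 0" for e
      using cont y(2) that lam by (rule eventually_dominating_partitions_less)
    show "eventually (\<lambda>n. \<exists>m\<in>dominating_partitions theta n (lam n). phi y - e < phi (normalize n m))
        sequentially" if "e > 0" for e
      using theta cont x y(1) that lam lam_partition by (rule eventually_dominating_partitions_greater)
  qed
  then show ?thesis
    using y by (auto simp: dominating_partitions_def)
qed

end
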